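(* Let $(f_n)_{n\geqslant1}$ be a sequence of nondecreasing functions $f_n:[0,\infty)\to[0,\infty)$. Assume that there is an increasing sequence $(s_k)_{k\geqslant1}\subset[0,\infty)$ with $s_k\to\infty$ such that for each $k$ the sequence $(f_n(s_k))_{n\geqslant1}$ has a limit, denoted $f(s_k)$ (possibly $+\infty$), and let $\ell=\lim_{k\to\infty}f(s_k)$ (which exists since $(f(s_k))_k$ is nondecreasing). Then: (i) for any sequence $t_n\to\infty$, $\liminf_{n\to\infty}f_n(t_n)\geqslant\ell$; (ii) there exists a nondecreasing sequence $(t_n^* )_{n\geqslant1}$ with $t_n^*\to\infty$ such that $f_n(t_n^* )\to\ell$; (iii) if $(t_n^* )_{n\geqslant1}$ is as in (ii), then for any sequence $(t_n)_{n\geqslant1}$ with $0\leqslant t_n\leqslant t_n^*$ and $t_n\to\infty$, one has $f_n(t_n)\to\ell$. *)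

theory Defs
  imports "HOL-Analysis.Analysis"
begin

end

theory Submission
  imports Defs
begin

text \<open>Each pointwise limit F k bounds f_n(t_n) from below asymptotically as soon as
  t_n \<ge> s_k, which gives (i), and (iii) follows by monotonicity of f_n. For (ii) take
  t*_n = s_(K n), where K n is the largest k \<le> n with f_m(s_k) < l + 1/(k+1) for all
  m \<ge> n; every such condition holds eventually, so K n grows without bound.\<close>

lemma tendsto_of_Liminf_Limsup_bounds:
  fixes X :: "nat \<Rightarrow> ereal"
  assumes "L \<le> liminf X" "limsup X \<le> L"
  shows "X \<longlonglongrightarrow> L"
proof -
  have "liminf X \<le> limsup X" by (rule Liminf_le_Limsup) simp
  then have "liminf X = L" "limsup X = L" using assms by auto
  then show ?thesis by (intro Liminf_eq_Limsup) auto
qed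

lemma obtain_diagonal_index:
  fixes P :: "nat \<Rightarrow> nat \<Rightarrow> bool"
  assumes ev: "\<And>k. eventually (P k) sequentially"
  obtains K :: "nat \<Rightarrow> nat"
  where "mono K" "filterlim K at_top sequentially" "eventually (\<lambda>n. P (K n) n) sequentially"
proof -
  define A where "A n = {k. k \<le> n \<and> (\<forall>m\<ge>n. P k m)}" for n
  define K where "K n = Max (insert 0 (A n))" for n
  have finA: "finite (A n)" for n
    by (rule finite_subset[of _ "{..n}"]) (auto simp: A_def)
  have in_A: "k \<in> A n" if "\<forall>m\<ge>N. P k m" "N \<le> n" "k \<le> n" for k N n
    using that by (auto simp: A_def)
  have "mono K"
  proof (rule monoI)
    fix n n' :: nat assume "n \<le> n'"
    then have "insert 0 (A n) \<subseteq> insert 0 (A n')" by (auto simp: A_def)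
    then show "K n \<le> K n'" unfolding K_def by (rule Max_mono) (use finA in auto)
  qed
  moreover have "filterlim K at_top sequentially"
    unfolding filterlim_at_top eventually_sequentially
  proof
    fix k
    obtain N where N: "\<forall>m\<ge>N. P k m" using ev[of k] by (auto simp: eventually_sequentially)
    have "k \<le> K n" if "max N k \<le> n" for n
      using in_A[OF N, of n] that finA[of n] by (auto simp: K_def intro: Max_ge)
    then show "\<exists>N. \<forall>n\<ge>N. k \<le> K n" by blast
  qed
  moreover have "eventually (\<lambda>n. P (K n) n) sequentially"
  proof -
    obtain N where N: "\<forall>m\<ge>N. P 0 m" using ev[of 0] by (auto simp: eventually_sequentially)
    have "P (K n) n" if "N \<le> n" for n
    proof -
      have "0 \<in> A n" using in_A[OF N that] by simp
      then have "K n \<in> A n" unfolding K_def using finA[of n]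
        by (metis Max_in empty_iff finite_insert insert_absorb)
      then show ?thesis by (auto simp: A_def)
    qed
    then show ?thesis by (auto simp: eventually_sequentially)
  qed
  ultimately show ?thesis by (rule that)
qed

locale pointwise_limits_along =
  fixes f :: "nat \<Rightarrow> real \<Rightarrow> real"
    and s :: "nat \<Rightarrow> real"
    and F :: "nat \<Rightarrow> ereal"
  assumes f_mono: "\<And>n. mono_on {0..} (f n)"
    and f_nonneg: "\<And>n x. x \<ge> 0 \<Longrightarrow> f n x \<ge> 0"
    and s_mono: "incseq s"
    and s_nonneg: "\<And>k. s k \<ge> 0"
    and s_lim: "filterlim s at_top sequentially"
    and F_lim: "\<And>k. (\<lambda>n. ereal (f n (s k))) \<longlonglongrightarrow> F k"
begin

lemma incseq_F: "incseq F"
proof (rule incseq_SucI)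
  fix k
  show "F k \<le> F (Suc k)"
  proof (rule LIMSEQ_le[OF F_lim F_lim], intro exI allI impI)
    fix n
    show "ereal (f n (s k)) \<le> ereal (f n (s (Suc k)))"
      using mono_onD[OF f_mono] s_nonneg incseq_SucD[OF s_mono, of k] by simp
  qed
qed

lemma F_nonneg: "0 \<le> F k"
  by (rule LIMSEQ_le_const[OF F_lim]) (use f_nonneg s_nonneg in auto)

lemma F_le_Liminf:
  assumes t_nonneg: "\<And>n. t n \<ge> 0" and t_lim: "filterlim t at_top sequentially"
  shows "F k \<le> liminf (\<lambda>n. ereal (f n (t n)))"
proof -
  have ev: "eventually (\<lambda>n. s k \<le> t n) sequentially"
    using t_lim by (auto simp: filterlim_at_top)
  have "F k = liminf (\<lambda>n. ereal (f n (s k)))"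
    using lim_imp_Liminf[OF _ F_lim] by simp
  also have "\<dots> \<le> liminf (\<lambda>n. ereal (f n (t n)))"
    by (rule Liminf_mono) (use ev in eventually_elim,
        use mono_onD[OF f_mono] s_nonneg t_nonneg in auto)
  finally show ?thesis .
qed

lemma Sup_le_Liminf:
  assumes "\<And>n. t n \<ge> 0" "filterlim t at_top sequentially"
  shows "(SUP k. F k) \<le> liminf (\<lambda>n. ereal (f n (t n)))"
  using F_le_Liminf[OF assms] by (rule SUP_least)

lemma tendsto_Sup_if_Limsup_le:
  assumes "\<And>n. t n \<ge> 0" "filterlim t at_top sequentially"
    and "limsup (\<lambda>n. ereal (f n (t n))) \<le> (SUP k. F k)"
  shows "(\<lambda>n. ereal (f n (t n))) \<longlonglongrightarrow> (SUP k. F k)"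
  using Sup_le_Liminf[OF assms(1,2)] assms(3) by (rule tendsto_of_Liminf_Limsup_bounds)

lemma tendsto_Sup_below:
  assumes t_bounds: "\<And>n. 0 \<le> t n \<and> t n \<le> tstar n"
    and t_lim: "filterlim t at_top sequentially"
    and tstar_lim: "(\<lambda>n. ereal (f n (tstar n))) \<longlonglongrightarrow> (SUP k. F k)"
  shows "(\<lambda>n. ereal (f n (t n))) \<longlonglongrightarrow> (SUP k. F k)"
proof (rule tendsto_Sup_if_Limsup_le)
  show "\<And>n. t n \<ge> 0" using t_bounds by simp
  have "limsup (\<lambda>n. ereal (f n (t n))) \<le> limsup (\<lambda>n. ereal (f n (tstar n)))"
    by (rule Limsup_mono) (use mono_onD[OF f_mono] t_bounds in auto)
  also have "\<dots> = (SUP k. F k)"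
    using lim_imp_Limsup[OF _ tstar_lim] by simp
  finally show "limsup (\<lambda>n. ereal (f n (t n))) \<le> (SUP k. F k)" .
qed (fact t_lim)

lemma exists_mono_tendsto_Sup:
  "\<exists>tstar. (\<forall>n. tstar n \<ge> 0) \<and> mono tstar \<and> filterlim tstar at_top sequentially
     \<and> (\<lambda>n. ereal (f n (tstar n))) \<longlonglongrightarrow> (SUP k. F k)"
proof (cases "SUP k. F k")
  case PInf
  then have "(\<lambda>n. ereal (f n (real n))) \<longlonglongrightarrow> (SUP k. F k)"
    by (intro tendsto_Sup_if_Limsup_le) (auto simp: filterlim_real_sequentially)
  then show ?thesis
    by (intro exI[of _ real]) (auto simp: mono_def filterlim_real_sequentially)
next
  case MInf
  then show ?thesis using F_nonneg[of 0] SUP_upper[of 0 UNIV F] by simp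
next
  case (real l)
  have "eventually (\<lambda>n. f n (s k) < l + inverse (real (Suc k))) sequentially" for k
  proof -
    have "F k < ereal (l + inverse (real (Suc k)))"
      using SUP_upper[of k UNIV F] real by (auto intro: order_le_less_trans)
    from order_tendstoD(2)[OF F_lim this] show ?thesis by simp
  qed
  then obtain K :: "nat \<Rightarrow> nat" where K_mono: "mono K"
    and K_lim: "filterlim K at_top sequentially"
    and K_bound: "eventually (\<lambda>n. f n (s (K n)) < l + inverse (real (Suc (K n)))) sequentially"
    by (rule obtain_diagonal_index)
  have bound_lim: "(\<lambda>n. ereal (l + inverse (real (Suc (K n))))) \<longlonglongrightarrow> ereal l"
  proof (intro tendsto_ereal)
    have "(\<lambda>n. inverse (real (Suc (K n)))) \<longlonglongrightarrow> 0"
      using filterlim_compose[OF LIMSEQ_inverse_real_of_nat K_lim] by simp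
    then show "(\<lambda>n. l + inverse (real (Suc (K n)))) \<longlonglongrightarrow> l"
      using tendsto_add[OF tendsto_const, of _ 0 sequentially l] by simp
  qed
  have "limsup (\<lambda>n. ereal (f n (s (K n))))
      \<le> limsup (\<lambda>n. ereal (l + inverse (real (Suc (K n)))))"
    by (rule Limsup_mono) (use K_bound in \<open>eventually_elim, simp\<close>)
  also have "\<dots> = (SUP k. F k)"
    using lim_imp_Limsup[OF _ bound_lim] real by simp
  finally have "limsup (\<lambda>n. ereal (f n (s (K n)))) \<le> (SUP k. F k)" .
  moreover have sK_lim: "filterlim (\<lambda>n. s (K n)) at_top sequentially"
    by (rule filterlim_compose[OF s_lim K_lim])
  ultimately have "(\<lambda>n. ereal (f n (s (K n)))) \<longlonglongrightarrow> (SUP k. F k)"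
    using s_nonneg by (intro tendsto_Sup_if_Limsup_le) auto
  moreover have "mono (\<lambda>n. s (K n))"
    using s_mono K_mono by (auto simp: mono_def)
  ultimately show ?thesis
    using s_nonneg sK_lim by (intro exI[of _ "\<lambda>n. s (K n)"]) auto
qed

end

theorem lemma2p2:
  fixes f :: "nat \<Rightarrow> real \<Rightarrow> real"
    and s :: "nat \<Rightarrow> real"
    and F :: "nat \<Rightarrow> ereal"
    and L :: ereal
  assumes f_mono: "\<And>n. mono_on {0..} (f n)"
    and f_nonneg: "\<And>n x. x \<ge> 0 \<Longrightarrow> f n x \<ge> 0"
    and s_incr: "strict_mono s"
    and s_nonneg: "\<And>k. s k \<ge> 0"
    and s_lim: "filterlim s at_top sequentially"
    and F_def: "\<And>k. (\<lambda>n. ereal (f n (s k))) \<longlonglongrightarrow> F k"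
    and l_def: "L = lim F"
  shows "(\<forall>t :: nat \<Rightarrow> real. (\<forall>n. t n \<ge> 0) \<longrightarrow> filterlim t at_top sequentially
            \<longrightarrow> liminf (\<lambda>n. ereal (f n (t n))) \<ge> L)
       \<and> (\<exists>tstar :: nat \<Rightarrow> real. (\<forall>n. tstar n \<ge> 0) \<and> mono tstar
            \<and> filterlim tstar at_top sequentially
            \<and> (\<lambda>n. ereal (f n (tstar n))) \<longlonglongrightarrow> L)
       \<and> (\<forall>tstar :: nat \<Rightarrow> real. ((\<forall>n. tstar n \<ge> 0) \<and> mono tstar
            \<and> filterlim tstar at_top sequentially
            \<and> (\<lambda>n. ereal (f n (tstar n))) \<longlonglongrightarrow> L) \<longrightarrow>
            (\<forall>t :: nat \<Rightarrow> real. (\<forall>n. 0 \<le> t n \<and> t n \<le> tstar n)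
               \<longrightarrow> filterlim t at_top sequentially
               \<longrightarrow> (\<lambda>n. ereal (f n (t n))) \<longlonglongrightarrow> L))"
proof -
  interpret pointwise_limits_along f s F
    using assms strict_mono_mono[OF s_incr] by unfold_locales (auto simp: mono_def)
  have "L = (SUP k. F k)"
    using l_def LIMSEQ_SUP[OF incseq_F] by (simp add: limI)
  then show ?thesis
    using Sup_le_Liminf exists_mono_tendsto_Sup tendsto_Sup_below by auto
qed

end
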